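(* Let $n \geq 2$ be an integer, let $p(x) \in \mathcal{T}_n$, and let $q(x) \in \mathcal{J}(p(x))$. Then $q(x) = \gcd(p(x), p'(x)) \cdot f(x)$ for some monic real-rooted integer polynomial $f(x)$ that interlaces $\mathrm{Min}(p,x)$.
   Context: A nonzero real polynomial is real-rooted if all its complex roots are real. For $n\ge1$, a Seidel trace polynomial of degree $n$ is a real-rooted polynomial $p(x)=\sum_{i=0}^n a_i x^{n-i}\in\mathbb{Z}[x]$ of degree $n$ with $a_0=1$, $a_1=0$, and $a_2=-\binom{n}{2}$ if $n\ge2$; $\mathcal{T}_n$ is the set of these. For real-rooted $p,q$ with $\deg p = m$, $\deg q = m-1$, roots $\lambda_1\le\dots\le\lambda_m$ of $p$ and $\mu_1\le\dots\le\mu_{m-1}$ of $q$, we say $q$ interlaces $p$ if $\lambda_i \le \mu_i \le \lambda_{i+1}$ for all $i\in\{1,\dots,m-1\}$. For $p\in\mathcal{T}_n$, $\mathcal{J}(p(x))$ is the set of integer polynomials $q(x)$ of degree $n-1$ with $q\in\mathcal{T}_{n-1}$ and $q$ interlacing $p$. Here $\gcd(p(x),p'(x))$ is the monic gcd, and $\mathrm{Min}(p,x) := p(x)/\gcd(p(x),p'(x))$, which is monic with simple roots, the same set of roots as $p$. *)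

theory Defs
  imports "HOL-Computational_Algebra.Computational_Algebra" "HOL-Computational_Algebra.Field_as_Ring"
begin

abbreviation rpoly :: "int poly \<Rightarrow> real poly" where
  "rpoly p \<equiv> map_poly real_of_int p"

definition real_rooted :: "real poly \<Rightarrow> bool" where
  "real_rooted p \<longleftrightarrow> p \<noteq> 0 \<and>
     (\<forall>z::complex. poly (map_poly complex_of_real p) z = 0 \<longrightarrow> z \<in> \<real>)"

text \<open>Seidel trace polynomials of degree n (as integer polynomials).
  With p = sum a_i x^(n-i): a_0 = coeff p n, a_1 = coeff p (n-1), a_2 = coeff p (n-2).\<close>
definition seidel_trace :: "nat \<Rightarrow> int poly set" where
  "seidel_trace n = {p. n \<ge> 1 \<and> real_rooted (rpoly p) \<and> degree p = n \<and>
      coeff p n = 1 \<and> coeff p (n - 1) = 0 \<and>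
      (n \<ge> 2 \<longrightarrow> coeff p (n - 2) = - int (n choose 2))}"

definition interlaces :: "real poly \<Rightarrow> real poly \<Rightarrow> bool" where
  "interlaces q p \<longleftrightarrow> real_rooted p \<and> real_rooted q \<and> degree q + 1 = degree p \<and>
     (\<exists>ls us. sorted ls \<and> sorted us \<and> length ls = degree p \<and> length us = degree q \<and>
        p = smult (lead_coeff p) (\<Prod>l\<leftarrow>ls. [:-l, 1:]) \<and>
        q = smult (lead_coeff q) (\<Prod>u\<leftarrow>us. [:-u, 1:]) \<and>
        (\<forall>i < degree q. ls ! i \<le> us ! i \<and> us ! i \<le> ls ! (i + 1)))"

definition J_set :: "nat \<Rightarrow> int poly \<Rightarrow> int poly set" where
  "J_set n p = {q. degree q = n - 1 \<and> q \<in> seidel_trace (n - 1) \<and>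
                   interlaces (rpoly q) (rpoly p)}"

text \<open>Min(p) = p / gcd(p, p'), with the monic gcd (gcd of real polynomials is normalized, i.e. monic).\<close>
definition Min_poly :: "real poly \<Rightarrow> real poly" where
  "Min_poly p = p div gcd p (pderiv p)"

end

(*
  Write p = prod (x - a)^(m a) over its distinct real roots a. Then gcd(p, p') = prod (x - a)^(m a - 1)
  and Min(p) = prod (x - a). Interlacing of sorted root lists is equivalent to a counting
  condition: every half-line (-inf, t] or (-inf, t) contains as many roots of p as of q, or one
  more. Comparing the counts on (-inf, a] and (-inf, a) shows that every root a of p is a root of q
  of multiplicity at least m a - 1, so gcd(p, p') divides q; the counting condition survives the
  removal of these common roots, so the cofactor f interlaces Min(p). Finally gcd(p, p') is a monic
  integer polynomial by Gauss' lemma, hence division of q by it stays in Z[x].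
*)

theory Submission
  imports Defs "Berlekamp_Zassenhaus.Factor_Bound"
begin

interpretation of_rat_poly_hom: field_hom' "of_rat :: rat \<Rightarrow> real" ..
interpretation of_real_poly_hom: map_poly_inj_idom_hom "of_real :: real \<Rightarrow> complex" ..

definition poly_of_roots :: "'a::comm_ring_1 multiset \<Rightarrow> 'a poly" where
  "poly_of_roots M = (\<Prod>a\<in>#M. [:-a, 1:])"

lemma poly_of_roots_simps [simp]:
  "poly_of_roots {#} = 1"
  "poly_of_roots (add_mset a M) = [:-a, 1:] * poly_of_roots M"
  "poly_of_roots (M + N) = poly_of_roots M * poly_of_roots N"
  by (simp_all add: poly_of_roots_def)

lemma prod_list_linear_eq_poly_of_roots: "(\<Prod>a\<leftarrow>xs. [:-a, 1:]) = poly_of_roots (mset xs)"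
  by (induct xs) auto

lemma poly_of_roots_nonzero [simp]: "poly_of_roots M \<noteq> (0 :: 'a::idom poly)"
  by (auto simp: poly_of_roots_def prod_mset_zero_iff)

lemma lead_coeff_poly_of_roots [simp]: "lead_coeff (poly_of_roots M) = (1 :: 'a::idom)"
  by (induct M) (simp_all add: lead_coeff_mult del: mult_pCons_left)

lemma degree_poly_of_roots [simp]: "degree (poly_of_roots M :: 'a::idom poly) = size M"
  by (induct M) (simp_all add: degree_mult_eq del: mult_pCons_left)

lemma order_poly_of_roots [simp]: "Polynomial.order x (poly_of_roots M :: 'a::idom poly) = count M x"
proof (induct M)
  case (add a M)
  have "Polynomial.order x (poly_of_roots (add_mset a M)) =
      Polynomial.order x [:-a, 1:] + Polynomial.order x (poly_of_roots M)"
    by (metis order_mult poly_of_roots_nonzero poly_of_roots_simps(2))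
  then show ?case
    using add order_linear'[of x "-a"] by simp
qed (simp add: order_0I)

lemma real_rooted_poly_of_roots: "real_rooted (poly_of_roots M)"
proof -
  have "poly (map_poly complex_of_real (poly_of_roots M)) z = (\<Prod>a\<in>#M. z - of_real a)" for z
    by (induct M) (simp_all add: of_real_poly_hom.hom_mult del: mult_pCons_left)
  then show ?thesis
    unfolding real_rooted_def by (auto simp: prod_mset_zero_iff)
qed

lemma dvd_poly_of_roots_imp_split:
  fixes A :: "'a::field_gcd poly"
  assumes "A dvd poly_of_roots M"
  shows "\<exists>N. A = Polynomial.smult (lead_coeff A) (poly_of_roots N)"
  using assms
proof (induct M arbitrary: A)
  case empty
  then obtain c where "A = [:c:]"
    by (auto elim: degree_eq_zeroE)
  then have "A = Polynomial.smult (lead_coeff A) (poly_of_roots {#})"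
    by simp
  then show ?case ..
next
  case (add a M)
  show ?case
  proof (cases "poly A a = 0")
    case True
    then obtain B where A: "A = [:-a, 1:] * B"
      by (meson dvdE poly_eq_0_iff_dvd)
    then have "B dvd poly_of_roots M"
      using add.prems by (simp only: poly_of_roots_simps(2) dvd_mult_cancel_left) simp
    then obtain N where "B = Polynomial.smult (lead_coeff B) (poly_of_roots N)"
      using add.hyps by blast
    moreover have "lead_coeff A = lead_coeff B"
      unfolding A by (simp add: lead_coeff_mult del: mult_pCons_left)
    ultimately have "A = Polynomial.smult (lead_coeff A) (poly_of_roots (add_mset a N))"
      unfolding A by (metis mult_smult_right poly_of_roots_simps(2))
    then show ?thesis by blast
  next
    case False
    have "prime_elem [:-a, 1:]"
      by (rule prime_elem_linear_field_poly) simp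
    moreover have "\<not> [:-a, 1:] dvd A"
      using False by (simp add: poly_eq_0_iff_dvd)
    ultimately have "algebraic_semidom_class.coprime [:-a, 1:] A"
      by (rule prime_elem_imp_coprime)
    then have "A dvd poly_of_roots M"
      by (metis add.prems algebraic_semidom_class.coprime_commute coprime_dvd_mult_right_iff
          poly_of_roots_simps(2))
    then show ?thesis
      using add.hyps by blast
  qed
qed

lemma sorted_nth_iff_less_length_filter:
  fixes xs :: "'a::linorder list"
  assumes "sorted xs" and down: "\<And>x y. x \<le> y \<Longrightarrow> P y \<Longrightarrow> P x" and "i < length xs"
  shows "P (xs ! i) \<longleftrightarrow> i < length (filter P xs)"
  using assms(1,3)
proof (induct xs arbitrary: i)
  case (Cons a xs)
  show ?case
  proof (cases "P a")
    case True
    then show ?thesis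
      using Cons by (cases i) auto
  next
    case False
    then have "\<forall>y\<in>set (a # xs). \<not> P y"
      using Cons.prems(1) down by auto
    then show ?thesis
      using Cons.prems(2) nth_mem[of i "a # xs"] by (auto simp: filter_empty_conv)
  qed
qed simp

lemma interlacing_imp_count_bounds:
  fixes ls us :: "'a::linorder list"
  assumes "sorted ls" "sorted us" "length ls = length us + 1"
    and interlacing: "\<forall>i < length us. ls ! i \<le> us ! i \<and> us ! i \<le> ls ! (i + 1)"
    and down: "\<And>x y. x \<le> y \<Longrightarrow> P y \<Longrightarrow> P x"
  shows "length (filter P us) \<le> length (filter P ls)"
    and "length (filter P ls) \<le> length (filter P us) + 1"
proof -
  have index_iff: "sorted xs \<Longrightarrow> j < length xs \<Longrightarrow> P (xs ! j) \<longleftrightarrow> j < length (filter P xs)"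
    for xs j
    using sorted_nth_iff_less_length_filter[of xs P j] down by blast
  show "length (filter P us) \<le> length (filter P ls)"
  proof (cases "filter P us = []")
    case False
    define k where "k = length (filter P us) - 1"
    have "length (filter P us) > 0"
      using False by simp
    then have k: "k < length us" "k < length (filter P us)"
      using length_filter_le[of P us] unfolding k_def by linarith+
    then have "P (us ! k)"
      using index_iff[OF assms(2)] by blast
    then have "P (ls ! k)"
      using interlacing down k(1) by blast
    then have "k < length (filter P ls)"
      using index_iff[OF assms(1)] k(1) assms(3) by simp
    then show ?thesis
      unfolding k_def by linarith
  qed simp
  show "length (filter P ls) \<le> length (filter P us) + 1"
  proof (cases "length (filter P ls) \<le> 1")
    case False
    define k where "k = length (filter P ls) - 2"
    have k: "k + 1 < length ls" "k + 1 < length (filter P ls)"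
      using False length_filter_le[of P ls] unfolding k_def by linarith+
    then have "P (ls ! (k + 1))"
      using index_iff[OF assms(1)] by blast
    then have "P (us ! k)"
      using interlacing down k(1) assms(3) by auto
    then have "k < length (filter P us)"
      using index_iff[OF assms(2)] k(1) assms(3) by simp
    then show ?thesis
      unfolding k_def by linarith
  qed simp
qed

lemma interlacing_if_count_bounds:
  fixes ls us :: "'a::linorder list"
  assumes "sorted ls" "sorted us" "length ls = length us + 1"
    and counts: "\<And>t. length (filter (\<lambda>x. x \<le> t) us) \<le> length (filter (\<lambda>x. x \<le> t) ls) \<and>
                     length (filter (\<lambda>x. x \<le> t) ls) \<le> length (filter (\<lambda>x. x \<le> t) us) + 1"
    and "i < length us"
  shows "ls ! i \<le> us ! i \<and> us ! i \<le> ls ! (i + 1)"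
proof
  have index_iff: "sorted xs \<Longrightarrow> j < length xs \<Longrightarrow> xs ! j \<le> t \<longleftrightarrow> j < length (filter (\<lambda>x. x \<le> t) xs)"
    for xs j and t :: 'a
    by (rule sorted_nth_iff_less_length_filter) auto
  have "i < length (filter (\<lambda>x. x \<le> us ! i) us)"
    using index_iff[OF assms(2) assms(5), where t = "us ! i"] by simp
  then have "i < length (filter (\<lambda>x. x \<le> us ! i) ls)"
    using counts[of "us ! i"] by linarith
  then show "ls ! i \<le> us ! i"
    using index_iff[OF assms(1), where j = i and t = "us ! i"] assms(3,5) by simp
  have "i + 1 < length (filter (\<lambda>x. x \<le> ls ! (i + 1)) ls)"
    using index_iff[OF assms(1), where j = "i + 1" and t = "ls ! (i + 1)"] assms(3,5) by simp
  then have "i < length (filter (\<lambda>x. x \<le> ls ! (i + 1)) us)"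
    using counts[of "ls ! (i + 1)"] by linarith
  then show "us ! i \<le> ls ! (i + 1)"
    using index_iff[OF assms(2) assms(5), where t = "ls ! (i + 1)"] by simp
qed

text \<open>Quantifying over all down-closed predicates, not only the closed half-lines, also gives the
  bounds on open half-lines; the difference of the counts on the two is a root multiplicity.\<close>

definition roots_interlace :: "'a::linorder multiset \<Rightarrow> 'a multiset \<Rightarrow> bool" where
  "roots_interlace U L \<longleftrightarrow> (\<forall>P. (\<forall>x y. x \<le> y \<longrightarrow> P y \<longrightarrow> P x) \<longrightarrow>
     size (filter_mset P U) \<le> size (filter_mset P L) \<and>
     size (filter_mset P L) \<le> size (filter_mset P U) + 1)"

lemma roots_interlaceD:
  assumes "roots_interlace U L" and "\<And>x y. x \<le> y \<Longrightarrow> P y \<Longrightarrow> P x"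
  shows "size (filter_mset P U) \<le> size (filter_mset P L)"
    and "size (filter_mset P L) \<le> size (filter_mset P U) + 1"
  using assms unfolding roots_interlace_def by blast+

lemma interlaces_imp_roots_interlace:
  assumes "interlaces Q P"
  obtains L U where "P = Polynomial.smult (lead_coeff P) (poly_of_roots L)"
    and "Q = Polynomial.smult (lead_coeff Q) (poly_of_roots U)"
    and "size L = size U + 1" and "roots_interlace U L"
proof -
  from assms obtain ls us where sorted: "sorted ls" "sorted us"
    and length: "length ls = degree P" "length us = degree Q" "degree Q + 1 = degree P"
    and P: "P = Polynomial.smult (lead_coeff P) (\<Prod>l\<leftarrow>ls. [:-l, 1:])"
    and Q: "Q = Polynomial.smult (lead_coeff Q) (\<Prod>u\<leftarrow>us. [:-u, 1:])"
    and interlacing: "\<forall>i < length us. ls ! i \<le> us ! i \<and> us ! i \<le> ls ! (i + 1)"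
    unfolding interlaces_def by auto
  have "roots_interlace (mset us) (mset ls)"
    unfolding roots_interlace_def mset_filter[symmetric] size_mset
    using interlacing_imp_count_bounds[OF sorted _ interlacing] length by auto
  moreover have "P = Polynomial.smult (lead_coeff P) (poly_of_roots (mset ls))"
    and "Q = Polynomial.smult (lead_coeff Q) (poly_of_roots (mset us))"
    using P Q by (simp_all only: prod_list_linear_eq_poly_of_roots)
  moreover have "size (mset ls) = size (mset us) + 1"
    using length by simp
  ultimately show ?thesis
    using that by blast
qed

lemma interlacesI:
  assumes "real_rooted p" and "real_rooted q" and "degree q + 1 = degree p"
    and "sorted ls" and "sorted us" and "length ls = degree p" and "length us = degree q"
    and "p = Polynomial.smult (lead_coeff p) (\<Prod>l\<leftarrow>ls. [:-l, 1:])"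
    and "q = Polynomial.smult (lead_coeff q) (\<Prod>u\<leftarrow>us. [:-u, 1:])"
    and "\<forall>i < degree q. ls ! i \<le> us ! i \<and> us ! i \<le> ls ! (i + 1)"
  shows "interlaces q p"
  unfolding interlaces_def using assms by blast

lemma interlaces_poly_of_roots:
  fixes L U :: "real multiset"
  assumes "size L = size U + 1" and "roots_interlace U L"
  shows "interlaces (poly_of_roots U) (poly_of_roots L)"
proof -
  define ls us where "ls = sorted_list_of_multiset L" and "us = sorted_list_of_multiset U"
  have mset: "mset ls = L" "mset us = U" and sorted: "sorted ls" "sorted us"
    unfolding ls_def us_def by simp_all
  have "length (filter (\<lambda>x. x \<le> t) us) \<le> length (filter (\<lambda>x. x \<le> t) ls) \<and>
      length (filter (\<lambda>x. x \<le> t) ls) \<le> length (filter (\<lambda>x. x \<le> t) us) + 1" for t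
    using roots_interlaceD[where P = "\<lambda>x. x \<le> t", OF assms(2)]
    unfolding mset[symmetric] mset_filter[symmetric] size_mset by auto
  then have "\<forall>i < degree (poly_of_roots U). ls ! i \<le> us ! i \<and> us ! i \<le> ls ! (i + 1)"
    using interlacing_if_count_bounds[OF sorted] assms(1) mset by (metis degree_poly_of_roots size_mset)
  moreover have "length ls = degree (poly_of_roots L)" "length us = degree (poly_of_roots U)"
    "degree (poly_of_roots U) + 1 = degree (poly_of_roots L)"
    using assms(1) mset by auto
  moreover have "poly_of_roots L = Polynomial.smult (lead_coeff (poly_of_roots L)) (\<Prod>l\<leftarrow>ls. [:-l, 1:])"
    "poly_of_roots U = Polynomial.smult (lead_coeff (poly_of_roots U)) (\<Prod>u\<leftarrow>us. [:-u, 1:])"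
    unfolding prod_list_linear_eq_poly_of_roots mset lead_coeff_poly_of_roots smult_1_left by simp_all
  ultimately show ?thesis
    using real_rooted_poly_of_roots sorted by (intro interlacesI)
qed

lemma size_filter_mset_le_eq:
  fixes M :: "'a::linorder multiset"
  shows "size {#y \<in># M. y \<le> x#} = size {#y \<in># M. y < x#} + count M x"
proof -
  have "{#y \<in># M. y \<le> x#} = {#y \<in># M. y < x#} + {#y \<in># M. y = x#}"
    by (induct M) auto
  then show ?thesis
    by (simp add: filter_eq_replicate_mset)
qed

lemma roots_interlace_multiple_roots_subset:
  assumes "roots_interlace U L"
  shows "L - mset_set (set_mset L) \<subseteq># U"
proof (rule mset_subset_eqI)
  fix x
  have "size {#y \<in># L. y \<le> x#} \<le> size {#y \<in># U. y \<le> x#} + 1"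
    and "size {#y \<in># U. y < x#} \<le> size {#y \<in># L. y < x#}"
    using roots_interlaceD[where P = "\<lambda>y. y \<le> x", OF assms]
      roots_interlaceD[where P = "\<lambda>y. y < x", OF assms]
    by auto
  then have "count L x \<le> count U x + 1"
    using size_filter_mset_le_eq[where M = L and x = x] size_filter_mset_le_eq[where M = U and x = x] by linarith
  then show "count (L - mset_set (set_mset L)) x \<le> count U x"
    by (auto simp: count_mset_set' not_in_iff)
qed

lemma roots_interlace_cancel:
  assumes "roots_interlace (N + U) (N + L)"
  shows "roots_interlace U L"
  using assms unfolding roots_interlace_def by auto

lemma gcd_pderiv_poly_of_roots:
  fixes L :: "'a::{field_char_0,field_gcd} multiset"
  shows "gcd (poly_of_roots L) (pderiv (poly_of_roots L)) = poly_of_roots (L - mset_set (set_mset L))"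
proof (cases "L = {#}")
  case False
  define P where "P = poly_of_roots L"
  define g where "g = gcd P (pderiv P)"
  have "pderiv P \<noteq> 0"
    using False by (simp add: P_def pderiv_eq_0_iff)
  have "lead_coeff g = 1"
    using unit_factor_gcd[of P "pderiv P"] by (simp add: g_def P_def unit_factor_poly_def)
  moreover obtain N where "g = Polynomial.smult (lead_coeff g) (poly_of_roots N)"
    using dvd_poly_of_roots_imp_split[of g L] unfolding g_def P_def by auto
  ultimately have g: "g = poly_of_roots N"
    by simp
  define Q where "Q = P div g"
  have "P = Q * g"
    unfolding Q_def g_def by simp
  moreover obtain e where "pderiv P = e * g"
    unfolding g_def by (metis dvd_def gcd_dvd2 mult.commute)
  moreover have "g = fst (bezout_coefficients P (pderiv P)) * P + snd (bezout_coefficients P (pderiv P)) * pderiv P"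
    unfolding g_def by (simp add: bezout_coefficients_fst_snd)
  ultimately have "Polynomial.order x Q = (if Polynomial.order x P = 0 then 0 else 1)" for x
    by (rule poly_squarefree_decomp_order[OF \<open>pderiv P \<noteq> 0\<close>])
  moreover have "Polynomial.order x P = Polynomial.order x Q + Polynomial.order x g" for x
    using \<open>P = Q * g\<close> by (metis P_def order_mult poly_of_roots_nonzero)
  ultimately have count_L: "count L x = (if count L x = 0 then 0 else 1) + count N x" for x
    by (simp add: P_def g)
  have "count N x = count (L - mset_set (set_mset L)) x" for x
  proof -
    have "count (mset_set (set_mset L)) x = (if count L x = 0 then 0 else 1)"
      by (simp add: count_mset_set' count_eq_zero_iff)
    then show ?thesis
      unfolding count_diff using count_L[of x] by linarith
  qed
  then show ?thesis
    using g multiset_eqI unfolding g_def P_def by metis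
qed simp

lemma Min_poly_poly_of_roots: "Min_poly (poly_of_roots L) = poly_of_roots (mset_set (set_mset L))"
proof -
  define D where "D = mset_set (set_mset L)"
  have "poly_of_roots L = poly_of_roots (L - D) * poly_of_roots D"
    using mset_set_set_mset_msubset[of L] by (simp add: D_def flip: poly_of_roots_simps(3))
  then show ?thesis
    unfolding Min_poly_def gcd_pderiv_poly_of_roots D_def by simp
qed

lemma of_int_poly_gcd_monic:
  fixes p h :: "int poly"
  assumes "lead_coeff p = 1"
  obtains g where "lead_coeff g = 1" and "gcd (rpoly p) (rpoly h) = rpoly g"
proof -
  define G where "G = gcd p h"
  have "gcd (rpoly p) (rpoly h) = map_poly of_rat (gcd (map_poly rat_of_int p) (map_poly rat_of_int h))"
    by (simp add: of_rat_poly_hom.map_poly_gcd map_poly_map_poly o_def)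
  also have "\<dots> = Polynomial.smult (inverse (of_int (lead_coeff G))) (rpoly G)"
    unfolding G_def gcd_rat_to_gcd_int
    by (simp add: of_rat_hom.map_poly_hom_smult map_poly_map_poly o_def of_rat_inverse)
  finally have gcd: "gcd (rpoly p) (rpoly h) = Polynomial.smult (inverse (of_int (lead_coeff G))) (rpoly G)" .
  obtain H where "p = G * H"
    unfolding G_def by (meson dvdE gcd_dvd1)
  then have "lead_coeff G * lead_coeff H = 1"
    using assms by (simp add: lead_coeff_mult)
  then have "lead_coeff G = 1 \<or> lead_coeff G = -1"
    using zmult_eq_1_iff by blast
  then have "lead_coeff (Polynomial.smult (lead_coeff G) G) = 1"
    and "inverse (of_int (lead_coeff G)) = (of_int (lead_coeff G) :: real)"
    by auto
  then show ?thesis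
    using that[of "Polynomial.smult (lead_coeff G) G"] gcd by (simp add: of_int_hom.map_poly_hom_smult)
qed

lemma of_int_poly_cofactor_of_monic:
  fixes q g :: "int poly"
  assumes "lead_coeff g = 1" and "rpoly q = rpoly g * F"
  obtains f where "F = rpoly f"
proof -
  have "g \<noteq> 0"
    using assms(1) by auto
  obtain f r where divmod: "pseudo_divmod q g = (f, r)"
    by fastforce
  have "q = g * f + r"
    using pseudo_divmod(1)[OF \<open>g \<noteq> 0\<close> divmod] assms(1) by simp
  then have "rpoly g * (F - rpoly f) = rpoly r"
    using assms(2) by (simp add: of_int_poly_hom.hom_add of_int_poly_hom.hom_mult right_diff_distrib)
  moreover have "r = 0 \<or> degree r < degree g"
    using pseudo_divmod(2)[OF \<open>g \<noteq> 0\<close> divmod] .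
  ultimately have "F - rpoly f = 0"
    using \<open>g \<noteq> 0\<close> degree_mult_eq[of "rpoly g" "F - rpoly f"]
    by (auto simp: of_int_hom.degree_map_poly_hom)
  then show ?thesis
    using that by simp
qed

lemma interlacing_cofactor_of_gcd_pderiv:
  fixes P Q :: "real poly"
  assumes "interlaces Q P" and "lead_coeff P = 1" and "lead_coeff Q = 1"
  obtains V where "Q = gcd P (pderiv P) * poly_of_roots V"
    and "interlaces (poly_of_roots V) (Min_poly P)"
proof -
  obtain L U where P_roots: "P = Polynomial.smult (lead_coeff P) (poly_of_roots L)"
    and Q_roots: "Q = Polynomial.smult (lead_coeff Q) (poly_of_roots U)"
    and "size L = size U + 1" and "roots_interlace U L"
    using assms(1) by (rule interlaces_imp_roots_interlace)
  have P: "P = poly_of_roots L" and Q: "Q = poly_of_roots U"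
    using P_roots Q_roots unfolding assms(2,3) smult_1_left .
  define D N where "D = mset_set (set_mset L)" and "N = L - D"
  define V where "V = U - N"
  have "N \<subseteq># U"
    using roots_interlace_multiple_roots_subset \<open>roots_interlace U L\<close> unfolding N_def D_def by blast
  then have L: "L = N + D" and U: "U = N + V"
    using mset_set_set_mset_msubset[of L] unfolding N_def D_def V_def by simp_all
  have "interlaces (poly_of_roots V) (poly_of_roots D)"
    using \<open>size L = size U + 1\<close> \<open>roots_interlace U L\<close> unfolding L U
    by (auto intro: interlaces_poly_of_roots roots_interlace_cancel)
  then have "interlaces (poly_of_roots V) (Min_poly P)"
    unfolding P D_def Min_poly_poly_of_roots .
  moreover have "Q = gcd P (pderiv P) * poly_of_roots V"
    unfolding P Q U gcd_pderiv_poly_of_roots N_def D_def by simp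
  ultimately show ?thesis
    using that by blast
qed

theorem proposition4p2:
  fixes n :: nat and p q :: "int poly"
  assumes "n \<ge> 2"
    and "p \<in> seidel_trace n"
    and "q \<in> J_set n p"
  shows "\<exists>f :: int poly. lead_coeff f = 1 \<and> real_rooted (rpoly f) \<and>
           rpoly q = gcd (rpoly p) (pderiv (rpoly p)) * rpoly f \<and>
           interlaces (rpoly f) (Min_poly (rpoly p))"
proof -
  have monic: "lead_coeff p = 1" "lead_coeff (rpoly p) = 1" "lead_coeff (rpoly q) = 1"
    and interlacing_qp: "interlaces (rpoly q) (rpoly p)"
    using assms(2,3) by (auto simp: seidel_trace_def J_set_def of_int_hom.hom_lead_coeff)
  obtain V where q: "rpoly q = gcd (rpoly p) (pderiv (rpoly p)) * poly_of_roots V"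
    and interlacing: "interlaces (poly_of_roots V) (Min_poly (rpoly p))"
    by (rule interlacing_cofactor_of_gcd_pderiv[OF interlacing_qp monic(2,3)])
  obtain g where "lead_coeff g = 1" and "gcd (rpoly p) (pderiv (rpoly p)) = rpoly g"
    using of_int_poly_gcd_monic[OF monic(1), of "pderiv p"] by (auto simp: of_int_hom.map_poly_pderiv)
  then obtain f where f: "poly_of_roots V = rpoly f"
    using q by (metis of_int_poly_cofactor_of_monic)
  have "lead_coeff f = 1"
    using lead_coeff_poly_of_roots[of V] unfolding f by (simp add: of_int_hom.hom_lead_coeff)
  moreover have "real_rooted (rpoly f)"
    unfolding f[symmetric] by (rule real_rooted_poly_of_roots)
  ultimately show ?thesis
    using q interlacing unfolding f by blast
qed

end
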